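(* Let $\Pi$ be a Lévy measure on $\mathbb{R}^d$ supported by the unit ball $D=\{y:|y|\le1\}$. Let $b:[0,1]\to[0,1]$ be continuous and increasing with $b(1)=1$ and $b(t)/t\to\infty$ as $t\to0$, and assume that on some interval $[0,t_0]$: (i) $b(t)/t^\rho$ is non-decreasing for some $\rho>1/3$; (ii) for every $\varepsilon>0$ there is $0<\delta_\varepsilon<t_0$ with $b(s)/b(t)\ge(1-\varepsilon)s/t$ for $0\le s\le t\le\delta_\varepsilon$. If $\int_0^1\overline{\Pi}(b(t))\,dt<\infty$, then: (a) $\int_0^1\frac{1}{b(t)^3}\int_{0<|y|\le b(t)}|y|^3\,\Pi(dy)\,dt<\infty$; (b) $\int_0^1\overline{\Pi}(\varepsilon b(t))\,dt<\infty$ for every $0<\varepsilon<1$; (c) $\frac{t}{b(t)}\int_{b(t)<|y|\le1}|y|\,\Pi(dy)\to0$ as $t\to0$.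
   Context: $\Pi$ is a Lévy measure ($\Pi(\{0\})=0$, $\int(1\wedge|y|^2)\Pi(dy)<\infty$), $|\cdot|$ the Euclidean norm, $\overline{\Pi}(x)=\Pi\{y:|y|>x\}$. *)

theory Defs
  imports "HOL-Analysis.Analysis"
begin

definition levy_measure :: "'a::euclidean_space measure \<Rightarrow> bool" where
  "levy_measure M \<longleftrightarrow> sets M = sets borel \<and> emeasure M {0} = 0 \<and>
     (\<integral>\<^sup>+ y. ennreal (min 1 (norm y ^ 2)) \<partial>M) < \<infinity>"

definition levy_tail :: "'a::euclidean_space measure \<Rightarrow> real \<Rightarrow> ennreal" where
  "levy_tail M x = emeasure M {y. norm y > x}"

end

theory Submission
  imports Defs
begin

text \<open>Let \<open>G(r)\<close> be the length of \<open>{t \<in> [0,1]. b t < r}\<close>. By Tonelli,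
  \<open>\<integral>\<^sub>0\<^sup>1 \<Pi>(|y| > b t) dt = \<integral> G(|y|) \<Pi>(dy)\<close>, so the hypothesis says that \<open>G(|y|)\<close>
  is \<open>\<Pi>\<close>-integrable. Each of (a)--(c) then follows by bounding the integrand in \<open>y\<close>
  (after exchanging the order of integration, for (a) and (b)) by a multiple of \<open>G(|y|)\<close>,
  plus a multiple of \<open>min 1 |y|\<^sup>2\<close> for (a). The bounds come from a point \<open>s \<le> G(r)\<close>
  with \<open>b s = r/2\<close>. Condition (i) gives \<open>b t \<ge> (r/2) (t/s)\<^sup>\<rho>\<close> for \<open>s \<le> t \<le> t\<^sub>0\<close>;
  hence \<open>{t. \<epsilon> b t < r} \<subseteq> [0, (2/\<epsilon>)\<^sup>1\<^sup>/\<^sup>\<rho> s / t\<^sub>0]\<close> for (b), and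
  \<open>(r / b t)\<^sup>3 \<le> 8 (s/t)\<^sup>3\<^sup>\<rho>\<close>, whose integral over \<open>[s,\<infinity>)\<close> is \<open>8s/(3\<rho>-1)\<close> since
  \<open>3\<rho> > 1\<close>, for (a). Condition (ii) with \<open>\<epsilon> = 1/2\<close> gives \<open>t / b t \<le> 2s / b s\<close> for
  \<open>t \<le> s\<close>, so \<open>r t / b t = O(G(r))\<close> uniformly in small \<open>t\<close> with \<open>b t < r\<close>, and dominated
  convergence proves (c).\<close>

definition sublevel_length :: "(real \<Rightarrow> real) \<Rightarrow> real \<Rightarrow> real" where
  "sublevel_length g r = measure lborel {t\<in>{0..1}. g t < r}"

lemma borel_measurable_indicator_times_continuous_on:
  fixes g :: "real \<Rightarrow> real"
  assumes "continuous_on {0..1} g"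
  shows "(\<lambda>t. indicator {0..1} t * g t) \<in> borel_measurable borel"
  using borel_measurable_continuous_on_indicator[OF _ assms] by simp

lemma sets_sublevel:
  fixes g :: "real \<Rightarrow> real"
  assumes "continuous_on {0..1} g"
  shows "{t\<in>{0..1}. g t < r} \<in> sets lborel"
proof -
  note [measurable] = borel_measurable_indicator_times_continuous_on[OF assms]
  have "{t\<in>{0..1}. g t < r} = {t. indicator {0..1} t * g t < r} \<inter> {0..1}"
    by auto
  also have "\<dots> \<in> sets lborel" by measurable
  finally show ?thesis .
qed

lemma emeasure_sublevel:
  "emeasure lborel {t\<in>{0..1}. g t < r} = ennreal (sublevel_length g r)"
proof -
  have "emeasure lborel {t\<in>{0..1}. g t < r} \<le> emeasure lborel {0..1::real}"
    by (intro emeasure_mono) auto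
  then show ?thesis
    unfolding sublevel_length_def by (intro emeasure_eq_ennreal_measure) (auto simp: top_unique)
qed

lemma sublevel_length_nonneg: "0 \<le> sublevel_length g r"
  unfolding sublevel_length_def by simp

lemma sublevel_length_le:
  assumes "{t\<in>{0..1}. g t < r} \<subseteq> {0..a}" "0 \<le> a"
  shows "sublevel_length g r \<le> a"
proof -
  have "ennreal (sublevel_length g r) \<le> emeasure lborel {0..a}"
    unfolding emeasure_sublevel[symmetric] by (intro emeasure_mono assms) auto
  then show ?thesis using assms(2) by simp
qed

lemma sublevel_length_le_1: "sublevel_length g r \<le> 1"
  by (rule sublevel_length_le) auto

lemma sublevel_length_ge:
  assumes "continuous_on {0..1} g" "mono_on {0..1} g" "0 \<le> s" "s \<le> 1" "g s < r"
  shows "s \<le> sublevel_length g r"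
proof -
  have "g x \<le> g s" if "0 \<le> x" "x \<le> s" for x
    using mono_onD[OF assms(2)] that assms(4) by auto
  then have "{0..s} \<subseteq> {t\<in>{0..1}. g t < r}"
    using assms(4,5) by fastforce
  then have "emeasure lborel {0..s} \<le> ennreal (sublevel_length g r)"
    unfolding emeasure_sublevel[symmetric] by (intro emeasure_mono sets_sublevel assms(1))
  then show ?thesis using assms(3) sublevel_length_nonneg by simp
qed

lemma sublevel_length_mono:
  assumes "continuous_on {0..1} g" "r \<le> r'"
  shows "sublevel_length g r \<le> sublevel_length g r'"
proof -
  have "ennreal (sublevel_length g r) \<le> ennreal (sublevel_length g r')"
    unfolding emeasure_sublevel[symmetric]
    using assms(2) by (intro emeasure_mono sets_sublevel assms(1)) auto
  then show ?thesis using sublevel_length_nonneg by simp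
qed

lemma borel_measurable_sublevel_length:
  assumes "continuous_on {0..1} g"
  shows "sublevel_length g \<in> borel_measurable borel"
  using assms by (intro borel_measurable_mono) (auto simp: mono_def sublevel_length_mono)

lemma levy_measure_sets: "levy_measure M \<Longrightarrow> sets M = sets borel"
  unfolding levy_measure_def by simp

lemma borel_measurable_levy_measure:
  "levy_measure M \<Longrightarrow> f \<in> borel_measurable borel \<Longrightarrow> f \<in> borel_measurable M"
  using measurable_cong_sets[OF levy_measure_sets refl] by blast

lemma sets_levy_tail_set:
  assumes "levy_measure M"
  shows "{y. c < norm y} \<in> sets M"
  using levy_measure_sets[OF assms] by (simp add: open_Collect_less)

lemma levy_tail_finite:
  assumes M: "levy_measure M" and c: "0 < c"
  shows "levy_tail M c < \<infinity>"
proof -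
  define d where "d = min 1 (c^2)"
  have d: "0 < d" using c by (simp add: d_def)
  have "levy_tail M c = (\<integral>\<^sup>+ y. indicator {y. c < norm y} y \<partial>M)"
    using sets_levy_tail_set[OF M] by (simp add: levy_tail_def)
  also have "\<dots> \<le> (\<integral>\<^sup>+ y. ennreal (1 / d) * ennreal (min 1 (norm y ^ 2)) \<partial>M)"
  proof (intro nn_integral_mono)
    fix y :: 'a
    show "indicator {y. c < norm y} y \<le> ennreal (1 / d) * ennreal (min 1 (norm y ^ 2))"
    proof (cases "c < norm y")
      case True
      have "c^2 < norm y ^ 2"
        by (rule power_strict_mono) (use True c in auto)
      then have "d \<le> min 1 (norm y ^ 2)"
        by (auto simp: d_def min_def)
      then have "1 \<le> 1 / d * min 1 (norm y ^ 2)"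
        using d by (simp add: le_divide_eq)
      have "indicator {y. c < norm y} y = ennreal 1"
        using True by simp
      also have "\<dots> \<le> ennreal (1 / d * min 1 (norm y ^ 2))"
        by (rule ennreal_leI) fact
      also have "\<dots> = ennreal (1 / d) * ennreal (min 1 (norm y ^ 2))"
        by (rule ennreal_mult) (use d in auto)
      finally show ?thesis .
    qed simp
  qed
  also have "\<dots> = ennreal (1 / d) * (\<integral>\<^sup>+ y. ennreal (min 1 (norm y ^ 2)) \<partial>M)"
    by (intro nn_integral_cmult borel_measurable_levy_measure[OF M]) measurable
  also have "\<dots> < \<infinity>"
    using M by (simp add: levy_measure_def ennreal_mult_less_top)
  finally show ?thesis .
qed

lemma levy_measure_sigma_finite:
  fixes M :: "'a::euclidean_space measure"
  assumes M: "levy_measure M"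
  shows "sigma_finite_measure M"
proof
  let ?A = "insert {0} (range (\<lambda>n::nat. {y::'a. 1 / Suc n < norm y}))"
  have "y \<in> \<Union>?A" for y
  proof (cases "y = 0")
    case False
    then have "norm y > 0" by simp
    then obtain n where "inverse (real (Suc n)) < norm y"
      using reals_Archimedean by blast
    then have "1 / Suc n < norm y"
      by (simp add: inverse_eq_divide)
    then show ?thesis by blast
  qed auto
  moreover have "space M = UNIV"
    using sets_eq_imp_space_eq[OF levy_measure_sets[OF M]] by simp
  ultimately have cover: "\<Union>?A = space M"
    by blast
  have "{0} \<in> sets M"
    using levy_measure_sets[OF M] by (simp add: borel_closed)
  moreover have "range (\<lambda>n::nat. {y::'a. 1 / Suc n < norm y}) \<subseteq> sets M"
    using sets_levy_tail_set[OF M] by (intro image_subsetI)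
  ultimately have sets: "?A \<subseteq> sets M"
    by (rule insert_subsetI)
  have "emeasure M {0} \<noteq> \<infinity>"
    using M by (simp add: levy_measure_def)
  moreover have "emeasure M {y. 1 / Suc n < norm y} \<noteq> \<infinity>" for n :: nat
    using levy_tail_finite[OF M, of "1 / Suc n"] by (simp add: levy_tail_def)
  ultimately have finite: "\<forall>a\<in>?A. emeasure M a \<noteq> \<infinity>"
    by blast
  show "\<exists>A. countable A \<and> A \<subseteq> sets M \<and> \<Union>A = space M \<and> (\<forall>a\<in>A. emeasure M a \<noteq> \<infinity>)"
    using cover sets finite by (intro exI[of _ ?A]) simp
qed

lemma levy_measure_nn_integral_swap:
  assumes M: "levy_measure M" and f: "(\<lambda>(t, y). f t y) \<in> borel_measurable (lborel \<Otimes>\<^sub>M M)"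
  shows "(\<integral>\<^sup>+ y. (\<integral>\<^sup>+ t. f t y \<partial>lborel) \<partial>M) = (\<integral>\<^sup>+ t. (\<integral>\<^sup>+ y. f t y \<partial>M) \<partial>lborel)"
proof -
  interpret M: sigma_finite_measure M
    by (rule levy_measure_sigma_finite[OF M])
  interpret pair_sigma_finite lborel M ..
  show ?thesis using Fubini'[OF f] .
qed

lemma nn_integral_levy_tail_eq_sublevel_length:
  assumes M: "levy_measure M" and g: "continuous_on {0..1} g"
  shows "(\<integral>\<^sup>+ t\<in>{0..1}. levy_tail M (g t) \<partial>lborel) =
         (\<integral>\<^sup>+ y. ennreal (sublevel_length g (norm y)) \<partial>M)"
proof -
  define h where "h t = indicator {0..1} t * g t" for t
  have [measurable]: "h \<in> borel_measurable borel"
    unfolding h_def by (rule borel_measurable_indicator_times_continuous_on[OF g])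
  have [measurable]: "(\<lambda>y. norm y) \<in> borel_measurable M"
    by (intro borel_measurable_levy_measure[OF M]) measurable
  let ?f = "\<lambda>t y. indicator {0..1} t * indicator {y. h t < norm y} y :: ennreal"
  have "(\<integral>\<^sup>+ t\<in>{0..1}. levy_tail M (g t) \<partial>lborel) = (\<integral>\<^sup>+ t. (\<integral>\<^sup>+ y. ?f t y \<partial>M) \<partial>lborel)"
  proof (intro nn_integral_cong)
    fix t :: real
    show "levy_tail M (g t) * indicator {0..1} t = (\<integral>\<^sup>+ y. ?f t y \<partial>M)"
      using sets_levy_tail_set[OF M] by (cases "t \<in> {0..1}") (simp_all add: levy_tail_def h_def)
  qed
  also have "\<dots> = (\<integral>\<^sup>+ y. (\<integral>\<^sup>+ t. ?f t y \<partial>lborel) \<partial>M)"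
    by (rule levy_measure_nn_integral_swap[OF M, symmetric]) measurable
  also have "\<dots> = (\<integral>\<^sup>+ y. ennreal (sublevel_length g (norm y)) \<partial>M)"
  proof (intro nn_integral_cong)
    fix y :: 'a
    have "(\<integral>\<^sup>+ t. ?f t y \<partial>lborel) = (\<integral>\<^sup>+ t. indicator {t\<in>{0..1}. g t < norm y} t \<partial>lborel)"
      by (intro nn_integral_cong) (auto simp: indicator_def h_def)
    also have "\<dots> = ennreal (sublevel_length g (norm y))"
      by (simp only: nn_integral_indicator[OF sets_sublevel[OF g]] emeasure_sublevel)
    finally show "(\<integral>\<^sup>+ t. ?f t y \<partial>lborel) = ennreal (sublevel_length g (norm y))" .
  qed
  finally show ?thesis .
qed

lemma borel_measurable_sublevel_length_norm:
  assumes "levy_measure M" "continuous_on {0..1} g"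
  shows "(\<lambda>y. sublevel_length g (norm y)) \<in> borel_measurable M"
  by (intro borel_measurable_levy_measure[OF assms(1)] measurable_compose[OF borel_measurable_norm]
      borel_measurable_sublevel_length[OF assms(2)])

lemma levy_tail_integral_finite_if_sublevel_length_le:
  assumes M: "levy_measure M" and g: "continuous_on {0..1} g" and h: "continuous_on {0..1} h"
    and le: "\<And>r. 0 \<le> r \<Longrightarrow> sublevel_length g r \<le> K * sublevel_length h r"
    and fin: "(\<integral>\<^sup>+ t\<in>{0..1}. levy_tail M (h t) \<partial>lborel) < \<infinity>"
  shows "(\<integral>\<^sup>+ t\<in>{0..1}. levy_tail M (g t) \<partial>lborel) < \<infinity>"
proof -
  have "(\<integral>\<^sup>+ t\<in>{0..1}. levy_tail M (g t) \<partial>lborel) =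
        (\<integral>\<^sup>+ y. ennreal (sublevel_length g (norm y)) \<partial>M)"
    by (rule nn_integral_levy_tail_eq_sublevel_length[OF M g])
  also have "\<dots> \<le> (\<integral>\<^sup>+ y. ennreal K * ennreal (sublevel_length h (norm y)) \<partial>M)"
    using le by (intro nn_integral_mono)
      (simp add: ennreal_leI sublevel_length_nonneg flip: ennreal_mult'')
  also have "\<dots> = ennreal K * (\<integral>\<^sup>+ y. ennreal (sublevel_length h (norm y)) \<partial>M)"
    using borel_measurable_sublevel_length_norm[OF M h] by (intro nn_integral_cmult) simp
  also have "\<dots> < \<infinity>"
    using fin nn_integral_levy_tail_eq_sublevel_length[OF M h] by (simp add: ennreal_mult_less_top)
  finally show ?thesis .
qed

lemma nn_integral_powr_tail:
  fixes s a :: real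
  assumes "0 < s" "1 < a"
  shows "(\<integral>\<^sup>+ t\<in>{s..}. ennreal ((s / t) powr a) \<partial>lborel) = ennreal (s / (a - 1))"
proof -
  have integral: "((\<lambda>t. s powr a * t powr (- a))
      has_integral s powr a * (- (s powr (- a + 1)) / (- a + 1))) {s..}"
    using assms by (intro has_integral_mult_right has_integral_powr_to_inf) auto
  have "s powr a * s powr (- a + 1) = s"
    using assms by (simp flip: powr_add)
  then have "s powr a * (- (s powr (- a + 1)) / (- a + 1)) = s / (a - 1)"
    by (simp add: divide_simps) argo
  with integral have "((\<lambda>t. s powr a * t powr (- a)) has_integral s / (a - 1)) {s..}"
    by simp
  then have "((\<lambda>t. (s / t) powr a) has_integral s / (a - 1)) {s..}"
    by (rule has_integral_eq[rotated]) (use assms in \<open>simp add: powr_divide powr_minus_divide\<close>)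
  then show ?thesis
    by (intro nn_integral_has_integral_lebesgue') auto
qed

lemma integral_dominated_convergence_at_right_0:
  fixes s :: "real \<Rightarrow> 'a \<Rightarrow> 'b::{banach, second_countable_topology}"
  assumes "f \<in> borel_measurable M" "\<And>t. s t \<in> borel_measurable M" "integrable M w"
    and lim: "AE x in M. ((\<lambda>t. s t x) \<longlongrightarrow> f x) (at_right 0)"
    and bound: "\<forall>\<^sub>F t in at_right 0. AE x in M. norm (s t x) \<le> w x"
  shows "((\<lambda>t. integral\<^sup>L M (s t)) \<longlongrightarrow> integral\<^sup>L M f) (at_right 0)"
proof -
  have "((\<lambda>u. integral\<^sup>L M (s (inverse u))) \<longlongrightarrow> integral\<^sup>L M f) at_top"
  proof (rule integral_dominated_convergence_at_top[where w = w])
    show "AE x in M. ((\<lambda>u. s (inverse u) x) \<longlongrightarrow> f x) at_top"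
      using lim by eventually_elim (simp add: filterlim_at_right_to_top)
    show "\<forall>\<^sub>F u in at_top. AE x in M. norm (s (inverse u) x) \<le> w x"
      using bound by (simp add: eventually_at_right_to_top)
  qed (use assms in auto)
  then show ?thesis
    by (simp add: filterlim_at_right_to_top)
qed

lemma mono_on_div_powr_imp_growth:
  fixes b :: "real \<Rightarrow> real"
  assumes "mono_on {0<..t0} (\<lambda>t. b t / t powr \<rho>)" "0 < s" "s \<le> t" "t \<le> t0"
  shows "b s * (t / s) powr \<rho> \<le> b t"
proof -
  have "b s / s powr \<rho> \<le> b t / t powr \<rho>"
    using mono_onD[OF assms(1)] assms(2-) by auto
  then show ?thesis
    using assms(2,3) by (simp add: powr_divide field_simps)
qed

lemma zero_if_mono_on_div_powr:
  fixes b :: "real \<Rightarrow> real"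
  assumes mono: "mono_on {0..1} b" and "0 \<le> b 0"
    and growth: "mono_on {0<..t0} (\<lambda>t. b t / t powr \<rho>)" and "0 < \<rho>" "0 < t0" "t0 \<le> 1"
  shows "b 0 = 0"
proof -
  have "\<forall>\<^sub>F t in at_right 0. 0 \<le> (t::real)"
    using eventually_at_right_less[of 0] by (auto elim: eventually_mono)
  then have "((\<lambda>t. b t0 / t0 powr \<rho> * t powr \<rho>) \<longlongrightarrow> b t0 / t0 powr \<rho> * 0) (at_right 0)"
    using \<open>0 < \<rho>\<close> by (intro tendsto_mult tendsto_const tendsto_zero_powrI tendsto_ident_at) auto
  moreover have "\<forall>\<^sub>F t in at_right 0. b 0 \<le> b t0 / t0 powr \<rho> * t powr \<rho>"
    unfolding eventually_at_right_field
  proof (intro exI[of _ t0] conjI allI impI)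
    fix t :: real
    assume t: "0 < t" "t < t0"
    have "b t / t powr \<rho> \<le> b t0 / t0 powr \<rho>"
      using mono_onD[OF growth] t by auto
    then have "b t \<le> b t0 / t0 powr \<rho> * t powr \<rho>"
      using t by (simp add: field_simps)
    moreover have "b 0 \<le> b t"
      using mono_onD[OF mono] t assms(6) by auto
    ultimately show "b 0 \<le> b t0 / t0 powr \<rho> * t powr \<rho>"
      by linarith
  qed (use assms in auto)
  ultimately have "b 0 \<le> 0"
    by (intro tendsto_lowerbound) auto
  with assms(2) show ?thesis by simp
qed

locale scaling_function =
  fixes b :: "real \<Rightarrow> real"
  assumes continuous: "continuous_on {0..1} b"
    and mono: "mono_on {0..1} b"
    and zero: "b 0 = 0"
    and one: "b 1 = 1"
begin

lemma mono_le: "0 \<le> s \<Longrightarrow> s \<le> t \<Longrightarrow> t \<le> 1 \<Longrightarrow> b s \<le> b t"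
  using mono_onD[OF mono] by auto

lemma nonneg: "0 \<le> t \<Longrightarrow> t \<le> 1 \<Longrightarrow> 0 \<le> b t"
  using mono_le[of 0 t] zero by simp

lemma le_one: "0 \<le> t \<Longrightarrow> t \<le> 1 \<Longrightarrow> b t \<le> 1"
  using mono_le[of t 1] one by simp

lemma half_level:
  assumes "0 < r" "r \<le> 1"
  obtains s where "0 < s" "s \<le> 1" "2 * b s = r" "s \<le> sublevel_length b r"
proof -
  obtain s where s: "0 \<le> s" "s \<le> 1" "b s = r / 2"
    using IVT'[of b 0 "r / 2" 1] zero one assms continuous by auto
  moreover have "s \<noteq> 0"
    using s assms zero by auto
  moreover have "s \<le> sublevel_length b r"
    using s assms by (intro sublevel_length_ge continuous mono) auto
  ultimately show ?thesis
    by (intro that[of s]) auto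
qed

lemma pos_if_filterlim_ratio:
  assumes lim: "filterlim (\<lambda>t. b t / t) at_top (at_right 0)" and "0 < t" "t \<le> 1"
  shows "0 < b t"
proof -
  have "\<forall>\<^sub>F u in at_right 0. 1 < b u / u"
    using lim by (simp add: filterlim_at_top_dense)
  then obtain e where e: "0 < e" "\<And>u. 0 < u \<Longrightarrow> u < e \<Longrightarrow> 1 < b u / u"
    unfolding eventually_at_right_field by auto
  define u where "u = min t (e / 2)"
  have u: "0 < u" "u < e" "u \<le> t"
    using assms e by (auto simp: u_def)
  then have "u < b u"
    using e(2)[of u] by (simp add: field_simps)
  also have "b u \<le> b t"
    using u assms by (intro mono_le) auto
  finally show ?thesis
    using u by simp
qed

lemma scaled_sublevel_subset:
  assumes growth: "mono_on {0<..t0} (\<lambda>t. b t / t powr \<rho>)"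
    and "0 < \<rho>" "0 < t0" "t0 \<le> 1" "0 < e" "e \<le> 2" "0 < s" "0 < b s"
  shows "{t\<in>{0..1}. e * b t < 2 * b s} \<subseteq> {0..(2 / e) powr (1 / \<rho>) * s / t0}"
proof -
  define L where "L = (2 / e) powr (1 / \<rho>)"
  have L: "1 \<le> L" "L powr \<rho> = 2 / e"
    using assms unfolding L_def by (auto simp: ge_one_powr_ge_zero powr_powr)
  show ?thesis
    unfolding L_def[symmetric]
  proof (rule subsetI, rule ccontr)
    fix t assume t: "t \<in> {t\<in>{0..1}. e * b t < 2 * b s}" "t \<notin> {0..L * s / t0}"
    then have "L * s < t0 * t" "0 \<le> t" "t \<le> 1"
      using assms by (auto simp: field_simps)
    moreover have "t0 * t \<le> t0" "t0 * t \<le> t"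
      using calculation assms by (auto intro: mult_left_le mult_left_le_one_le)
    ultimately have "L * s < t0" "L * s < t"
      by linarith+
    define u where "u = min t t0"
    have "s \<le> L * s"
      using L assms by simp
    then have u: "L * s < u" "s < u" "u \<le> t0" "u \<le> t"
      using \<open>L * s < t0\<close> \<open>L * s < t\<close> by (auto simp: u_def)
    have "L < u / s"
      using u assms by (simp add: field_simps)
    then have "2 / e < (u / s) powr \<rho>"
      using L assms by (metis powr_less_mono2 order.trans zero_le_one)
    then have "b s * (2 / e) < b s * (u / s) powr \<rho>"
      using assms by (intro mult_strict_left_mono) auto
    then have "2 * b s / e < b s * (u / s) powr \<rho>"
      by (simp add: field_simps)
    also have "\<dots> \<le> b u"
      using u assms by (intro mono_on_div_powr_imp_growth[OF growth]) auto
    also have "\<dots> \<le> b t"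
      using u t assms by (intro mono_le) auto
    finally show False
      using t \<open>0 < e\<close> by (simp add: field_simps)
  qed
qed

lemma sublevel_length_scaled_le:
  assumes growth: "mono_on {0<..t0} (\<lambda>t. b t / t powr \<rho>)"
    and "0 < \<rho>" "0 < t0" "t0 \<le> 1" "0 < e" "e \<le> 2" "0 \<le> r"
  shows "sublevel_length (\<lambda>t. e * b t) r \<le> (2 / e) powr (1 / \<rho>) / t0 * sublevel_length b r"
proof -
  define K where "K = (2 / e) powr (1 / \<rho>) / t0"
  have "1 \<le> (2 / e) powr (1 / \<rho>)"
    using assms by (auto intro: ge_one_powr_ge_zero)
  then have K: "1 \<le> K"
    using assms by (simp add: K_def field_simps)
  consider "r = 0" | "0 < r" "r \<le> 1" | "1 < r"
    using assms by linarith
  then have "sublevel_length (\<lambda>t. e * b t) r \<le> K * sublevel_length b r"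
  proof cases
    case 1
    have "0 \<le> e * b t" if "0 \<le> t" "t \<le> 1" for t
      using nonneg[OF that] \<open>0 < e\<close> by simp
    then have "{t\<in>{0..1}. e * b t < r} \<subseteq> {0..0}"
      using 1 by fastforce
    then have "sublevel_length (\<lambda>t. e * b t) r \<le> 0"
      by (rule sublevel_length_le) simp
    also have "0 \<le> K * sublevel_length b r"
      using K sublevel_length_nonneg[of b r] by simp
    finally show ?thesis .
  next
    case 2
    then obtain s where s: "0 < s" "s \<le> 1" "2 * b s = r" "s \<le> sublevel_length b r"
      using half_level by blast
    have "{t\<in>{0..1}. e * b t < r} \<subseteq> {0..(2 / e) powr (1 / \<rho>) * s / t0}"
      unfolding s(3)[symmetric] using s 2 assms by (intro scaled_sublevel_subset[OF growth]) auto
    then have "sublevel_length (\<lambda>t. e * b t) r \<le> (2 / e) powr (1 / \<rho>) * s / t0"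
      by (rule sublevel_length_le) (use s assms in simp)
    also have "\<dots> = K * s"
      by (simp add: K_def)
    also have "\<dots> \<le> K * sublevel_length b r"
      using K s by simp
    finally show ?thesis .
  next
    case 3
    have "1 \<le> sublevel_length b r"
      using 3 one by (intro sublevel_length_ge continuous mono) auto
    with K have "1 \<le> K * sublevel_length b r"
      by (metis mult_mono' mult_1 zero_le_one)
    with sublevel_length_le_1 show ?thesis
      by (rule order_trans)
  qed
  then show ?thesis
    by (simp add: K_def)
qed

lemma cube_ratio_le:
  assumes growth: "mono_on {0<..t0} (\<lambda>t. b t / t powr \<rho>)"
    and "0 < t0" "0 < b t0" and s: "0 < s" "s \<le> 1" "2 * b s = r" "0 < r"
    and t: "0 \<le> t" "t \<le> 1" "r \<le> b t"
  shows "s < t" "(r / b t) ^ 3 \<le> 8 * (s / t) powr (3 * \<rho>) + r ^ 3 / b t0 ^ 3"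
proof -
  show "s < t"
  proof (rule ccontr)
    assume "\<not> s < t"
    then have "b t \<le> b s"
      using t s by (intro mono_le) auto
    then show False
      using t s by linarith
  qed
  have "(r / b t) ^ 3 \<le> 8 * (s / t) powr (3 * \<rho>)" if "t \<le> t0"
  proof -
    have "b s * (t / s) powr \<rho> \<le> b t"
      using mono_on_div_powr_imp_growth[OF growth, of s t] s \<open>s < t\<close> that by simp
    then have "r / 2 * (t / s) powr \<rho> \<le> b t"
      by (simp add: s(3)[symmetric])
    then have "r / b t \<le> 2 * (s / t) powr \<rho>"
      using t s \<open>s < t\<close> by (simp add: field_simps powr_divide)
    then have "(r / b t) ^ 3 \<le> (2 * (s / t) powr \<rho>) ^ 3"
      using t s by (intro power_mono) auto
    also have "\<dots> = 8 * (s / t) powr (3 * \<rho>)"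
      using s \<open>s < t\<close> by (simp add: power_mult_distrib powr_powr mult.commute flip: powr_realpow)
    finally show ?thesis .
  qed
  moreover have "(r / b t) ^ 3 \<le> r ^ 3 / b t0 ^ 3" if "t0 < t"
  proof -
    have "b t0 \<le> b t"
      using that t assms by (intro mono_le) auto
    then have "(r / b t) ^ 3 \<le> (r / b t0) ^ 3"
      using assms by (intro power_mono divide_left_mono) auto
    then show ?thesis
      by (simp add: power_divide)
  qed
  moreover have "0 \<le> (s / t) powr (3 * \<rho>)" "0 \<le> r ^ 3 / b t0 ^ 3"
    using s assms by auto
  ultimately show "(r / b t) ^ 3 \<le> 8 * (s / t) powr (3 * \<rho>) + r ^ 3 / b t0 ^ 3"
    by (cases "t \<le> t0") (auto simp: not_le intro: add_increasing add_increasing2)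
qed

lemma nn_integral_cube_ratio_le:
  assumes growth: "mono_on {0<..t0} (\<lambda>t. b t / t powr \<rho>)"
    and "1/3 < \<rho>" "0 < t0" "0 < b t0" "0 < r" "r \<le> 1"
  shows "(\<integral>\<^sup>+ t\<in>{t\<in>{0..1}. r \<le> b t}. ennreal ((r / b t) ^ 3) \<partial>lborel)
           \<le> ennreal (8 / (3 * \<rho> - 1) * sublevel_length b r + r ^ 3 / b t0 ^ 3)"
proof -
  obtain s where s: "0 < s" "s \<le> 1" "2 * b s = r" "s \<le> sublevel_length b r"
    using half_level assms by blast
  have "ennreal ((r / b t) ^ 3) * indicator {t\<in>{0..1}. r \<le> b t} t
      \<le> ennreal 8 * (ennreal ((s / t) powr (3 * \<rho>)) * indicator {s..} t)
         + ennreal (r ^ 3 / b t0 ^ 3) * indicator {0..1} t" for t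
  proof (cases "t \<in> {0..1} \<and> r \<le> b t")
    case True
    then have "s < t" and le: "(r / b t) ^ 3 \<le> 8 * (s / t) powr (3 * \<rho>) + r ^ 3 / b t0 ^ 3"
      using cube_ratio_le[OF growth] s assms by auto
    have "0 \<le> 8 * (s / t) powr (3 * \<rho>)" "0 \<le> r ^ 3 / b t0 ^ 3"
      using assms by auto
    then have "ennreal (8 * (s / t) powr (3 * \<rho>) + r ^ 3 / b t0 ^ 3)
        = ennreal 8 * (ennreal ((s / t) powr (3 * \<rho>)) * 1) + ennreal (r ^ 3 / b t0 ^ 3) * 1"
      by (simp add: ennreal_mult)
    with ennreal_leI[OF le] show ?thesis
      using True \<open>s < t\<close> by simp
  qed simp
  then have "(\<integral>\<^sup>+ t\<in>{t\<in>{0..1}. r \<le> b t}. ennreal ((r / b t) ^ 3) \<partial>lborel)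
      \<le> (\<integral>\<^sup>+ t. ennreal 8 * (ennreal ((s / t) powr (3 * \<rho>)) * indicator {s..} t)
           + ennreal (r ^ 3 / b t0 ^ 3) * indicator {0..1} t \<partial>lborel)"
    by (intro nn_integral_mono)
  also have "\<dots> = ennreal 8 * (\<integral>\<^sup>+ t\<in>{s..}. ennreal ((s / t) powr (3 * \<rho>)) \<partial>lborel)
           + ennreal (r ^ 3 / b t0 ^ 3) * emeasure lborel {0..1::real}"
    by (simp add: nn_integral_add nn_integral_cmult)
  also have "\<dots> = ennreal 8 * ennreal (s / (3 * \<rho> - 1)) + ennreal (r ^ 3 / b t0 ^ 3)"
    using s assms by (simp add: nn_integral_powr_tail)
  also have "\<dots> = ennreal (8 * (s / (3 * \<rho> - 1)) + r ^ 3 / b t0 ^ 3)"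
  proof -
    have "0 \<le> 8 * (s / (3 * \<rho> - 1))" "0 \<le> r ^ 3 / b t0 ^ 3"
      using s assms by auto
    then show ?thesis
      by (subst ennreal_plus) (auto simp only: ennreal_mult' zero_le_numeral)
  qed
  also have "\<dots> \<le> ennreal (8 / (3 * \<rho> - 1) * sublevel_length b r + r ^ 3 / b t0 ^ 3)"
  proof (intro ennreal_leI add_right_mono)
    have "8 / (3 * \<rho> - 1) * s \<le> 8 / (3 * \<rho> - 1) * sublevel_length b r"
      using s assms by (intro mult_left_mono) auto
    then show "8 * (s / (3 * \<rho> - 1)) \<le> 8 / (3 * \<rho> - 1) * sublevel_length b r"
      by simp
  qed
  finally show ?thesis .
qed

lemma nn_integral_cube_swap:
  fixes M :: "'a::euclidean_space measure"
  assumes M: "levy_measure M"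
  shows "(\<integral>\<^sup>+ t\<in>{0..1}. ennreal (1 / b t ^ 3) *
            (\<integral>\<^sup>+ y\<in>{y. 0 < norm y \<and> norm y \<le> b t}. ennreal (norm y ^ 3) \<partial>M) \<partial>lborel)
       = (\<integral>\<^sup>+ y. (\<integral>\<^sup>+ t\<in>{t\<in>{0..1}. 0 < norm y \<and> norm y \<le> b t}. ennreal ((norm y / b t) ^ 3)
            \<partial>lborel) \<partial>M)"
proof -
  define h where "h t = indicator {0..1} t * b t" for t
  have [measurable]: "h \<in> borel_measurable borel"
    unfolding h_def by (rule borel_measurable_indicator_times_continuous_on[OF continuous])
  have [measurable]: "(\<lambda>y. norm y) \<in> borel_measurable M"
    by (intro borel_measurable_levy_measure[OF M]) measurable
  define F where "F t y = indicator {0..1} t * indicator {y. 0 < norm y \<and> norm y \<le> h t} y *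
      ennreal ((norm y / h t) ^ 3)" for t and y :: 'a
  have "ennreal (1 / b t ^ 3) * (\<integral>\<^sup>+ y\<in>{y. 0 < norm y \<and> norm y \<le> b t}. ennreal (norm y ^ 3) \<partial>M)
      * indicator {0..1} t = (\<integral>\<^sup>+ y. F t y \<partial>M)" for t
  proof (cases "t \<in> {0..1}")
    case True
    have "ennreal (1 / b t ^ 3) * (\<integral>\<^sup>+ y\<in>{y. 0 < norm y \<and> norm y \<le> b t}. ennreal (norm y ^ 3) \<partial>M)
        = (\<integral>\<^sup>+ y. ennreal (1 / b t ^ 3) *
            (ennreal (norm y ^ 3) * indicator {y. 0 < norm y \<and> norm y \<le> b t} y) \<partial>M)"
      by (rule nn_integral_cmult[symmetric]) measurable
    also have "\<dots> = (\<integral>\<^sup>+ y. F t y \<partial>M)"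
      using True nonneg[of t] by (intro nn_integral_cong)
        (auto simp: F_def h_def indicator_def power_divide ennreal_mult'[symmetric])
    finally show ?thesis
      using True by simp
  qed (simp add: F_def)
  then have "(\<integral>\<^sup>+ t\<in>{0..1}. ennreal (1 / b t ^ 3) *
            (\<integral>\<^sup>+ y\<in>{y. 0 < norm y \<and> norm y \<le> b t}. ennreal (norm y ^ 3) \<partial>M) \<partial>lborel)
      = (\<integral>\<^sup>+ t. (\<integral>\<^sup>+ y. F t y \<partial>M) \<partial>lborel)"
    by (intro nn_integral_cong) simp
  also have "\<dots> = (\<integral>\<^sup>+ y. (\<integral>\<^sup>+ t. F t y \<partial>lborel) \<partial>M)"
    by (rule levy_measure_nn_integral_swap[OF M, symmetric]) (unfold F_def, measurable)
  also have "\<dots> = (\<integral>\<^sup>+ y. (\<integral>\<^sup>+ t\<in>{t\<in>{0..1}. 0 < norm y \<and> norm y \<le> b t}.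
                      ennreal ((norm y / b t) ^ 3) \<partial>lborel) \<partial>M)"
    by (intro nn_integral_cong) (auto simp: F_def h_def indicator_def)
  finally show ?thesis .
qed

lemma nn_integral_cube_ratio_bound:
  assumes growth: "mono_on {0<..t0} (\<lambda>t. b t / t powr \<rho>)"
    and "1/3 < \<rho>" "0 < t0" "0 < b t0"
  shows "(\<integral>\<^sup>+ t\<in>{t\<in>{0..1}. 0 < r \<and> r \<le> b t}. ennreal ((r / b t) ^ 3) \<partial>lborel)
      \<le> ennreal (8 / (3 * \<rho> - 1)) * ennreal (sublevel_length b r)
         + ennreal (1 / b t0 ^ 3) * ennreal (min 1 (r ^ 2))"
proof (cases "0 < r \<and> r \<le> 1")
  case True
  define C where "C = 8 / (3 * \<rho> - 1)"
  have set_eq: "{t\<in>{0..1}. 0 < r \<and> r \<le> b t} = {t\<in>{0..1}. r \<le> b t}"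
    using True by simp
  have "(\<integral>\<^sup>+ t\<in>{t\<in>{0..1}. 0 < r \<and> r \<le> b t}. ennreal ((r / b t) ^ 3) \<partial>lborel)
      \<le> ennreal (C * sublevel_length b r + r ^ 3 / b t0 ^ 3)"
    unfolding set_eq C_def by (rule nn_integral_cube_ratio_le[OF growth]) (use True assms in auto)
  also have "\<dots> \<le> ennreal (C * sublevel_length b r + 1 / b t0 ^ 3 * min 1 (r ^ 2))"
  proof (intro ennreal_leI add_left_mono)
    have "r ^ 3 \<le> min 1 (r ^ 2)"
      using True by (simp add: power_decreasing power_le_one)
    then show "r ^ 3 / b t0 ^ 3 \<le> 1 / b t0 ^ 3 * min 1 (r ^ 2)"
      using assms by (simp add: divide_right_mono)
  qed
  also have "\<dots> = ennreal C * ennreal (sublevel_length b r) + ennreal (1 / b t0 ^ 3) * ennreal (min 1 (r ^ 2))"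
  proof -
    have "0 \<le> C" "0 \<le> 1 / b t0 ^ 3"
      using assms by (auto simp: C_def)
    then show ?thesis
      using sublevel_length_nonneg[of b r] by (subst ennreal_plus)
        (auto simp only: ennreal_mult' mult_nonneg_nonneg zero_le_one min.boundedI zero_le_power2)
  qed
  finally show ?thesis
    unfolding C_def .
next
  case False
  then have "{t\<in>{0..1}. 0 < r \<and> r \<le> b t} = {}"
    using le_one by force
  then show ?thesis
    by simp
qed

lemma levy_cube_integral_finite:
  fixes M :: "'a::euclidean_space measure"
  assumes M: "levy_measure M"
    and growth: "mono_on {0<..t0} (\<lambda>t. b t / t powr \<rho>)"
    and "1/3 < \<rho>" "0 < t0" "0 < b t0"
    and fin: "(\<integral>\<^sup>+ y. ennreal (sublevel_length b (norm y)) \<partial>M) < \<infinity>"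
  shows "(\<integral>\<^sup>+ t\<in>{0..1}. ennreal (1 / b t ^ 3) *
           (\<integral>\<^sup>+ y\<in>{y. 0 < norm y \<and> norm y \<le> b t}. ennreal (norm y ^ 3) \<partial>M) \<partial>lborel) < \<infinity>"
proof -
  have [measurable]: "(\<lambda>y. norm y) \<in> borel_measurable M"
    by (intro borel_measurable_levy_measure[OF M]) measurable
  have "(\<integral>\<^sup>+ y. (\<integral>\<^sup>+ t\<in>{t\<in>{0..1}. 0 < norm y \<and> norm y \<le> b t}. ennreal ((norm y / b t) ^ 3)
                \<partial>lborel) \<partial>M)
      \<le> (\<integral>\<^sup>+ y. ennreal (8 / (3 * \<rho> - 1)) * ennreal (sublevel_length b (norm y))
                 + ennreal (1 / b t0 ^ 3) * ennreal (min 1 (norm y ^ 2)) \<partial>M)"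
    using assms by (intro nn_integral_mono nn_integral_cube_ratio_bound[OF growth]) auto
  also have "\<dots> = ennreal (8 / (3 * \<rho> - 1)) * (\<integral>\<^sup>+ y. ennreal (sublevel_length b (norm y)) \<partial>M)
                    + ennreal (1 / b t0 ^ 3) * (\<integral>\<^sup>+ y. ennreal (min 1 (norm y ^ 2)) \<partial>M)"
    using borel_measurable_sublevel_length_norm[OF M continuous]
    by (simp add: nn_integral_add nn_integral_cmult)
  also have "\<dots> < \<infinity>"
    using fin M by (simp add: levy_measure_def ennreal_mult_less_top)
  finally show ?thesis
    unfolding nn_integral_cube_swap[OF M] .
qed

lemma ratio_mult_le_sublevel_length:
  assumes half: "\<And>s t. 0 \<le> s \<Longrightarrow> s \<le> t \<Longrightarrow> t \<le> \<delta> \<Longrightarrow> s / (2 * t) \<le> b s / b t"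
    and "\<delta> \<le> 1" and t: "0 < t" "t < \<delta>" "t / b t \<le> 1" and r: "b t < r" "r \<le> 1"
  shows "t / b t * r \<le> max 4 (1 / \<delta>) * sublevel_length b r"
proof -
  have "0 \<le> b t"
    using t \<open>\<delta> \<le> 1\<close> by (intro nonneg) auto
  then have "0 < r"
    using r by linarith
  then obtain s where s: "0 < s" "s \<le> 1" "2 * b s = r" "s \<le> sublevel_length b r"
    using half_level r(2) by blast
  have "t \<le> sublevel_length b r"
    using t r \<open>\<delta> \<le> 1\<close> by (intro sublevel_length_ge continuous mono) auto
  have K: "4 * sublevel_length b r \<le> max 4 (1 / \<delta>) * sublevel_length b r"
    "1 / \<delta> * sublevel_length b r \<le> max 4 (1 / \<delta>) * sublevel_length b r"
    using sublevel_length_nonneg[of b r] by (intro mult_right_mono; simp)+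
  consider "s \<le> t" | "t < s" "s \<le> \<delta>" | "\<delta> < s"
    by linarith
  then show ?thesis
  proof cases
    case 1
    then have "r \<le> 2 * b t"
      using s t \<open>\<delta> \<le> 1\<close> mono_le[of s t] by auto
    then have "t / b t * r \<le> t / b t * (2 * b t)"
      using t \<open>0 \<le> b t\<close> by (intro mult_left_mono) auto
    also have "\<dots> \<le> 4 * sublevel_length b r"
      using \<open>t \<le> sublevel_length b r\<close> t by simp
    finally show ?thesis
      using K(1) by linarith
  next
    case 2
    have "t / (2 * s) \<le> b t / b s"
      using half[of t s] t 2 by auto
    moreover have "0 < b s"
      using s \<open>0 < r\<close> by linarith
    ultimately have "t * b s \<le> 2 * s * b t"
      using s by (simp add: field_simps)
    then have "t / b t * r \<le> 4 * s"
      using s \<open>0 \<le> b t\<close> by (cases "b t = 0") (auto simp: field_simps s(3)[symmetric])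
    also have "\<dots> \<le> 4 * sublevel_length b r"
      using s by simp
    finally show ?thesis
      using K(1) by linarith
  next
    case 3
    have "t / b t * r \<le> 1"
      using t r \<open>0 < r\<close> by (intro mult_le_one) auto
    also have "\<dots> \<le> 1 / \<delta> * sublevel_length b r"
      using 3 s t by (simp add: field_simps)
    finally show ?thesis
      using K(2) by linarith
  qed
qed

lemma eventually_truncated_norm_le:
  assumes ratio_0: "((\<lambda>t. t / b t) \<longlongrightarrow> 0) (at_right 0)"
    and half: "0 < \<delta>" "\<delta> \<le> 1" "\<And>s t. 0 \<le> s \<Longrightarrow> s \<le> t \<Longrightarrow> t \<le> \<delta> \<Longrightarrow> s / (2 * t) \<le> b s / b t"
  shows "\<forall>\<^sub>F t in at_right 0. \<forall>y::'a::real_normed_vector.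
           \<bar>t / b t * (indicator {y. b t < norm y \<and> norm y \<le> 1} y * norm y)\<bar>
             \<le> max 4 (1 / \<delta>) * sublevel_length b (norm y)"
proof -
  have "\<forall>\<^sub>F t in at_right 0. t / b t < 1"
    using ratio_0 by (rule order_tendstoD) simp
  moreover have "\<forall>\<^sub>F t in at_right 0. 0 < t \<and> t < \<delta>"
    unfolding eventually_at_right_field using half(1) by (intro exI[of _ \<delta>]) auto
  ultimately show ?thesis
  proof eventually_elim
    case (elim t)
    have "0 \<le> b t"
      using elim half(2) by (intro nonneg) auto
    show ?case
    proof
      fix y :: 'a
      show "\<bar>t / b t * (indicator {y. b t < norm y \<and> norm y \<le> 1} y * norm y)\<bar>
             \<le> max 4 (1 / \<delta>) * sublevel_length b (norm y)"
      proof (cases "b t < norm y \<and> norm y \<le> 1")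
        case True
        then have "\<bar>t / b t * (indicator {y. b t < norm y \<and> norm y \<le> 1} y * norm y)\<bar> = t / b t * norm y"
          using elim \<open>0 \<le> b t\<close> by simp
        also have "\<dots> \<le> max 4 (1 / \<delta>) * sublevel_length b (norm y)"
          by (rule ratio_mult_le_sublevel_length[OF half(3) half(2)]) (use elim True in auto)
        finally show ?thesis .
      qed (simp add: sublevel_length_nonneg)
    qed
  qed
qed

lemma tendsto_ratio_truncated_first_moment:
  fixes M :: "'a::euclidean_space measure"
  assumes M: "levy_measure M"
    and ratio: "filterlim (\<lambda>t. b t / t) at_top (at_right 0)"
    and half: "0 < \<delta>" "\<delta> \<le> 1" "\<And>s t. 0 \<le> s \<Longrightarrow> s \<le> t \<Longrightarrow> t \<le> \<delta> \<Longrightarrow> s / (2 * t) \<le> b s / b t"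
    and fin: "(\<integral>\<^sup>+ y. ennreal (sublevel_length b (norm y)) \<partial>M) < \<infinity>"
  shows "((\<lambda>t. t / b t * (\<integral>y\<in>{y. b t < norm y \<and> norm y \<le> 1}. norm y \<partial>M)) \<longlongrightarrow> 0) (at_right 0)"
proof -
  define \<phi> where "\<phi> t y = t / b t * (indicator {y. b t < norm y \<and> norm y \<le> 1} y * norm y)"
    for t and y :: 'a
  have [measurable]: "(\<lambda>y. norm y) \<in> borel_measurable M"
    by (intro borel_measurable_levy_measure[OF M]) measurable
  have ratio_0: "((\<lambda>t. t / b t) \<longlongrightarrow> 0) (at_right 0)"
    using tendsto_inverse_0_at_top[OF ratio] by simp
  have "((\<lambda>t. integral\<^sup>L M (\<phi> t)) \<longlongrightarrow> integral\<^sup>L M (\<lambda>_. 0)) (at_right 0)"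
  proof (rule integral_dominated_convergence_at_right_0)
    show "\<phi> t \<in> borel_measurable M" for t
      unfolding \<phi>_def by measurable
    show "integrable M (\<lambda>y. max 4 (1 / \<delta>) * sublevel_length b (norm y))"
    proof (intro integrable_mult_right)
      show "integrable M (\<lambda>y. sublevel_length b (norm y))"
        using fin borel_measurable_sublevel_length_norm[OF M continuous]
        by (intro integrableI_nonneg) (auto simp: sublevel_length_nonneg)
    qed
    show "AE y in M. ((\<lambda>t. \<phi> t y) \<longlongrightarrow> 0) (at_right 0)"
    proof (rule AE_I2, rule Lim_null_comparison)
      fix y :: 'a
      show "\<forall>\<^sub>F t in at_right 0. norm (\<phi> t y) \<le> norm (t / b t) * norm y"
        by (intro always_eventually allI) (simp add: \<phi>_def indicator_def abs_mult)
      show "((\<lambda>t. norm (t / b t) * norm y) \<longlongrightarrow> 0) (at_right 0)"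
        using tendsto_mult[OF tendsto_norm[OF ratio_0] tendsto_const[of "norm y"]] by simp
    qed
    have "\<forall>\<^sub>F t in at_right 0. \<forall>y::'a.
        \<bar>t / b t * (indicator {y. b t < norm y \<and> norm y \<le> 1} y * norm y)\<bar>
          \<le> max 4 (1 / \<delta>) * sublevel_length b (norm y)"
      by (rule eventually_truncated_norm_le[OF ratio_0 half(1,2)]) (use half(3) in blast)
    then show "\<forall>\<^sub>F t in at_right 0. AE y in M. norm (\<phi> t y) \<le> max 4 (1 / \<delta>) * sublevel_length b (norm y)"
      by eventually_elim (intro AE_I2, simp add: \<phi>_def)
  qed simp
  moreover have "t / b t * (\<integral>y\<in>{y. b t < norm y \<and> norm y \<le> 1}. norm y \<partial>M) = integral\<^sup>L M (\<phi> t)" for t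
    unfolding \<phi>_def set_lebesgue_integral_def by simp
  ultimately show ?thesis
    by simp
qed

end

theorem lemma3p1:
  fixes M :: "'a::euclidean_space measure" and b :: "real \<Rightarrow> real" and t0 :: real
  assumes levy: "levy_measure M"
    and supp: "emeasure M {y. norm y > 1} = 0"
    and b_cont: "continuous_on {0..1} b"
    and b_range: "b ` {0..1} \<subseteq> {0..1}"
    and b_mono: "mono_on {0..1} b"
    and b_1: "b 1 = 1"
    and b_lim: "filterlim (\<lambda>t. b t / t) at_top (at_right 0)"
    and t0: "0 < t0" "t0 \<le> 1"
    and cond_i: "\<exists>\<rho>>1/3. mono_on {0<..t0} (\<lambda>t. b t / t powr \<rho>)"
    and cond_ii: "\<forall>\<epsilon>>0. \<exists>\<delta>. 0 < \<delta> \<and> \<delta> < t0 \<and>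
                    (\<forall>s t. 0 \<le> s \<and> s \<le> t \<and> t \<le> \<delta> \<longrightarrow> b s / b t \<ge> (1 - \<epsilon>) * s / t)"
    and int_fin: "(\<integral>\<^sup>+ t\<in>{0..1}. levy_tail M (b t) \<partial>lborel) < \<infinity>"
  shows "((\<integral>\<^sup>+ t\<in>{0..1}. ennreal (1 / b t ^ 3) *
            (\<integral>\<^sup>+ y\<in>{y. 0 < norm y \<and> norm y \<le> b t}. ennreal (norm y ^ 3) \<partial>M) \<partial>lborel) < \<infinity>) \<and>
         (\<forall>\<epsilon>. 0 < \<epsilon> \<and> \<epsilon> < 1 \<longrightarrow>
            (\<integral>\<^sup>+ t\<in>{0..1}. levy_tail M (\<epsilon> * b t) \<partial>lborel) < \<infinity>) \<and>
         ((\<lambda>t. t / b t * (\<integral>y\<in>{y. b t < norm y \<and> norm y \<le> 1}. norm y \<partial>M))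
            \<longlongrightarrow> 0) (at_right 0)"
proof -
  obtain \<rho> where \<rho>: "1/3 < \<rho>" and growth: "mono_on {0<..t0} (\<lambda>t. b t / t powr \<rho>)"
    using cond_i by blast
  have "b 0 = 0"
    using b_range \<rho> t0 by (intro zero_if_mono_on_div_powr[OF b_mono _ growth]) (auto simp: image_subset_iff)
  then interpret scaling_function b
    using b_cont b_mono b_1 by unfold_locales
  have fin: "(\<integral>\<^sup>+ y. ennreal (sublevel_length b (norm y)) \<partial>M) < \<infinity>"
    using int_fin nn_integral_levy_tail_eq_sublevel_length[OF levy b_cont] by simp
  have "0 < b t0"
    using t0 by (intro pos_if_filterlim_ratio[OF b_lim]) auto
  obtain \<delta> where \<delta>: "0 < \<delta>" "\<delta> < t0"
    and half: "\<And>s t. 0 \<le> s \<Longrightarrow> s \<le> t \<Longrightarrow> t \<le> \<delta> \<Longrightarrow> s / (2 * t) \<le> b s / b t"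
    using cond_ii[rule_format, of "1/2"] by auto
  have scaled: "(\<integral>\<^sup>+ t\<in>{0..1}. levy_tail M (\<epsilon> * b t) \<partial>lborel) < \<infinity>" if "0 < \<epsilon>" "\<epsilon> < 1" for \<epsilon>
  proof (rule levy_tail_integral_finite_if_sublevel_length_le[OF levy _ b_cont _ int_fin])
    show "continuous_on {0..1} (\<lambda>t. \<epsilon> * b t)"
      using b_cont by (intro continuous_intros)
    show "sublevel_length (\<lambda>t. \<epsilon> * b t) r \<le> (2 / \<epsilon>) powr (1 / \<rho>) / t0 * sublevel_length b r"
      if "0 \<le> r" for r
      using that \<open>0 < \<epsilon>\<close> \<open>\<epsilon> < 1\<close> \<rho> t0 by (intro sublevel_length_scaled_le[OF growth]) auto
  qed
  show ?thesis
    using levy_cube_integral_finite[OF levy growth \<rho> t0(1) \<open>0 < b t0\<close> fin] scaled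
      tendsto_ratio_truncated_first_moment[OF levy b_lim \<delta>(1) _ half fin] \<delta> t0 by auto
qed

end
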